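(* Let $m,n$ be integers, let $G=\langle a,b\mid a w_k^n b=w_k^{n+1}\rangle$ where $w_k=(ab^{-1})^m ab(a^{-1}b)^m$, and let $r=w_k^n(ab^{-1})^m$. Then $G=\langle a,b\mid r=\overleftarrow{r}\rangle$.
   Context: For a word $u$ in the free group $F_{a,b}$, $\overleftarrow{u}$ denotes the word obtained from $u$ by writing its letters in reversed order (e.g. $\overleftarrow{ab^{-1}}=b^{-1}a$). The group $G$ is the link group $\pi_1(S^3-J(k,l))$ of the double twist link with $k=2m+1$, $l=2n+1$. *)

theory Defs
  imports Main
begin

text \<open>Words in the free group on the generators a, b. A letter is a generator
together with a flag: False = the generator itself, True = its inverse.\<close>

datatype gen = GA | GB

type_synonym letter = "gen \<times> bool"
type_synonym word = "letter list"

definition ga :: word where "ga = [(GA, False)]"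
definition gb :: word where "gb = [(GB, False)]"

fun inv_letter :: "letter \<Rightarrow> letter" where
  "inv_letter (g, e) = (g, \<not> e)"

definition word_inv :: "word \<Rightarrow> word" where
  "word_inv w = rev (map inv_letter w)"

definition word_pow :: "word \<Rightarrow> int \<Rightarrow> word" where
  "word_pow w k = (if 0 \<le> k then concat (replicate (nat k) w)
                   else concat (replicate (nat (- k)) (word_inv w)))"

definition word_rev :: "word \<Rightarrow> word" where
  "word_rev w = rev w"

inductive pres_eq :: "word set \<Rightarrow> word \<Rightarrow> word \<Rightarrow> bool" for R :: "word set" where
  refl: "pres_eq R u u"
| sym: "pres_eq R u v \<Longrightarrow> pres_eq R v u"
| trans: "pres_eq R u v \<Longrightarrow> pres_eq R v w \<Longrightarrow> pres_eq R u w"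
| cancel: "pres_eq R (u @ [x, inv_letter x] @ v) (u @ v)"
| relator: "r \<in> R \<Longrightarrow> pres_eq R (u @ r @ v) (u @ v)"

definition relation :: "word \<Rightarrow> word \<Rightarrow> word" where
  "relation l r = l @ word_inv r"

definition wk :: "int \<Rightarrow> word" where
  "wk m = word_pow (ga @ word_inv gb) m @ ga @ gb @ word_pow (word_inv ga @ gb) m"

definition rk :: "int \<Rightarrow> int \<Rightarrow> word" where
  "rk m n = word_pow (wk m) n @ word_pow (ga @ word_inv gb) m"

end

theory Submission
  imports Defs
begin

text \<open>Put x = a b^-1 and y = a^-1 b. Conjugating x by a gives y^-1 and conjugating y by
  b^-1 gives x^-1, so w_k = a y^-m x^-m b, and the reversed word x^-m b a y^-m is the
  conjugate of a^-1 w_k a by y^-m. With these identities a w_k^n b w_k^-(n+1) becomes, in the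
  free group, the conjugate by a of r (rev r)^-1; and conjugate relators define the same
  presentation.\<close>

text \<open>The power g^k in a group that need not be commutative; additive notation is forced
  because \<^class>\<open>group_add\<close> is the only group class of Main.\<close>

definition zpow :: "'a::group_add \<Rightarrow> int \<Rightarrow> 'a" where
  "zpow g k = (if 0 \<le> k then sum_list (replicate (nat k) g)
               else sum_list (replicate (nat (- k)) (- g)))"

lemma sum_list_replicate_add_commute:
  "sum_list (replicate n g) + g = g + sum_list (replicate n (g::'a::monoid_add))"
  by (induction n) (simp_all add: add.assoc)

lemma uminus_sum_list_replicate:
  "- sum_list (replicate n g) = sum_list (replicate n (- g :: 'a::group_add))"
  by (induction n) (simp_all add: minus_add sum_list_replicate_add_commute del: add_uminus_conv_diff)

lemma sum_list_replicate_conjugate: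
  "sum_list (replicate n (- c + g + c)) = - c + sum_list (replicate n g) + (c::'a::group_add)"
  by (induction n) (simp_all add: add.assoc)

lemma zpow_one [simp]: "zpow g 1 = g"
  by (simp add: zpow_def)

lemma zpow_succ: "zpow g (k + 1) = zpow g k + g"
proof (cases "0 \<le> k")
  case True
  then have "nat (k + 1) = Suc (nat k)" by simp
  with True show ?thesis by (simp add: zpow_def sum_list_replicate_add_commute)
next
  case False
  then have "nat (- k) = Suc (nat (- (k + 1)))" by simp
  with False show ?thesis
    by (simp add: zpow_def add.assoc flip: sum_list_replicate_add_commute)
qed

lemma zpow_add: "zpow g (i + j) = zpow g i + zpow g j"
proof (induction j rule: int_induct[where k = 0])
  case base
  then show ?case by (simp add: zpow_def)
next
  case (step1 j)
  then show ?case using zpow_succ[of g "i + j"] zpow_succ[of g j] by (simp add: add.assoc)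
next
  case (step2 j)
  have "zpow g (i + (j - 1)) + g = zpow g i + zpow g (j - 1) + g"
    using step2 zpow_succ[of g "i + (j - 1)"] zpow_succ[of g "j - 1"] by (simp add: add.assoc)
  then show ?case by simp
qed

lemma zpow_uminus: "zpow (- g) k = - zpow g k"
  by (simp add: zpow_def uminus_sum_list_replicate)

lemma zpow_conjugate: "zpow (- c + g + c) k = - c + zpow g k + c"
proof -
  have "- (- c + g + c) = - c + - g + c" by (simp add: minus_add add.assoc)
  then show ?thesis
    by (simp add: zpow_def sum_list_replicate_conjugate del: add_uminus_conv_diff)
qed

lemma double_twist_relators_conjugate:
  fixes a b :: "'a::group_add" and m n :: int
  defines "x \<equiv> a - b" and "y \<equiv> - a + b"
  defines "w \<equiv> zpow x m + a + b + zpow y m"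
    \<comment> \<open>\<open>w'\<close> is the reversal of \<open>w\<close>: reversal fixes the letters and maps \<open>x\<close>, \<open>y\<close> to \<open>- y\<close>, \<open>- x\<close>\<close>
    and "w' \<equiv> zpow (- x) m + b + a + zpow (- y) m"
  shows "a + zpow w n + b - zpow w (n + 1)
       = a + (zpow w n + zpow x m - (zpow (- y) m + zpow w' n)) - a"
proof -
  note add_uminus_conv_diff [simp del] diff_conv_add_uminus [simp] add.assoc [simp] minus_add [simp]
  have "- a + x + a = - y" and "- (- b) + y + - b = - x"
    by (simp_all add: x_def y_def)
  then have "zpow x m + a = a + zpow (- y) m" and "b + zpow y m = zpow (- x) m + b"
    using zpow_conjugate[of a x m] zpow_conjugate[of "- b" y m] by simp_all
  then have w_eq: "w = a + zpow (- y) m + zpow (- x) m + b"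
    by (simp add: w_def)
  then have "w' = - zpow (- y) m + (- a + w + a) + zpow (- y) m"
    by (simp add: w'_def zpow_uminus)
  then have "zpow w' n = - zpow (- y) m + (- a + zpow w n + a) + zpow (- y) m"
    using zpow_conjugate[of "zpow (- y) m" "- a + w + a" n] zpow_conjugate[of a w n] by simp
  moreover have "zpow w (n + 1) = zpow w n + w"
    by (simp add: zpow_add)
  ultimately show ?thesis
    by (simp add: w_eq zpow_uminus)
qed

lemma pres_eq_append_context:
  "pres_eq R u u' \<Longrightarrow> pres_eq R (p @ u @ q) (p @ u' @ q)"
proof (induction rule: pres_eq.induct)
  case (cancel u x v)
  then show ?case using pres_eq.cancel[of R "p @ u" x "v @ q"] by simp
next
  case (relator r u v)
  then show ?case using pres_eq.relator[of r R "p @ u" "v @ q"] by simp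
qed (auto intro: pres_eq.intros)

lemma pres_eq_append:
  "pres_eq R u u' \<Longrightarrow> pres_eq R v v' \<Longrightarrow> pres_eq R (u @ v) (u' @ v')"
  using pres_eq_append_context[of R u u' "[]" v] pres_eq_append_context[of R v v' u' "[]"]
  by (auto intro: pres_eq.trans)

lemma inv_letter_inv [simp]: "inv_letter (inv_letter x) = x"
  by (cases x) simp

lemma word_inv_Nil [simp]: "word_inv [] = []"
  by (simp add: word_inv_def)

lemma word_inv_append [simp]: "word_inv (u @ v) = word_inv v @ word_inv u"
  by (simp add: word_inv_def)

lemma word_inv_word_inv [simp]: "word_inv (word_inv u) = u"
  by (simp add: word_inv_def rev_map comp_def)

lemma rev_word_inv: "rev (word_inv u) = word_inv (rev u)"
  by (simp add: word_inv_def rev_map)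

lemma rev_word_pow: "rev (word_pow u k) = word_pow (rev u) k"
  by (simp add: word_pow_def rev_concat rev_word_inv)

lemma pres_eq_append_word_inv: "pres_eq R (w @ word_inv w) []"
proof (induction w)
  case Nil
  then show ?case by (simp add: pres_eq.refl)
next
  case (Cons x w)
  have "pres_eq R ([x] @ (w @ word_inv w) @ [inv_letter x]) ([x] @ [] @ [inv_letter x])"
    using Cons.IH by (rule pres_eq_append_context)
  moreover have "pres_eq R [x, inv_letter x] []"
    using pres_eq.cancel[of R "[]" x "[]"] by simp
  ultimately show ?case by (auto simp: word_inv_def intro: pres_eq.trans)
qed

lemma pres_eq_free_word_inv:
  "pres_eq {} u v \<Longrightarrow> pres_eq {} (word_inv u) (word_inv v)"
proof (induction rule: pres_eq.induct)
  case (cancel u x v)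
  then show ?case using pres_eq.cancel[of "{}" "word_inv v" x "word_inv u"]
    by (simp add: word_inv_def)
qed (auto intro: pres_eq.intros)

lemma pres_eq_if_relators_trivial:
  assumes "pres_eq R u v" and "\<And>r. r \<in> R \<Longrightarrow> pres_eq S r []"
  shows "pres_eq S u v"
  using assms
proof (induction rule: pres_eq.induct)
  case (relator r u v)
  then show ?case using pres_eq_append_context[of S r "[]" u v] by simp
next
  case (cancel u x v)
  show ?case by (rule pres_eq.cancel)
qed (auto intro: pres_eq.intros)

quotient_type free_group = word / "pres_eq {}"
  by (rule equivpI) (auto simp: reflp_def symp_def transp_def intro: pres_eq.intros)

instantiation free_group :: group_add
begin

lift_definition zero_free_group :: free_group is "[]" .

lift_definition plus_free_group :: "free_group \<Rightarrow> free_group \<Rightarrow> free_group" is "(@)"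
  by (rule pres_eq_append)

lift_definition uminus_free_group :: "free_group \<Rightarrow> free_group" is word_inv
  by (rule pres_eq_free_word_inv)

lift_definition minus_free_group :: "free_group \<Rightarrow> free_group \<Rightarrow> free_group"
  is "\<lambda>u v. u @ word_inv v"
  by (intro pres_eq_append pres_eq_free_word_inv)

instance
proof
  fix a b c :: free_group
  show "a + b + c = a + (b + c)" by transfer (simp add: pres_eq.refl)
  show "0 + a = a" by transfer (simp add: pres_eq.refl)
  show "a + 0 = a" by transfer (simp add: pres_eq.refl)
  show "- a + a = 0" by transfer (metis pres_eq_append_word_inv word_inv_word_inv)
  show "a + - b = a - b" by transfer (simp add: pres_eq.refl)
qed

end

lemma abs_free_group_append: "abs_free_group (u @ v) = abs_free_group u + abs_free_group v"
  by (simp add: plus_free_group.abs_eq)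

lemma abs_free_group_word_inv: "abs_free_group (word_inv u) = - abs_free_group u"
  by (simp add: uminus_free_group.abs_eq)

lemma abs_free_group_word_pow: "abs_free_group (word_pow u k) = zpow (abs_free_group u) k"
proof -
  have "abs_free_group (concat ws) = sum_list (map abs_free_group ws)" for ws
    by (induction ws) (simp_all add: abs_free_group_append zero_free_group.abs_eq)
  then show ?thesis
    by (simp add: word_pow_def zpow_def abs_free_group_word_inv)
qed

lemma pres_eq_conjugate_relator:
  assumes "abs_free_group r = abs_free_group (c @ r' @ word_inv c)"
  shows "pres_eq {r} = pres_eq {r'}"
proof -
  have conjugate_trivial: "pres_eq {s'} s []" if "pres_eq {} s (d @ s' @ word_inv d)" for s s' d
  proof -
    have "pres_eq {s'} s (d @ s' @ word_inv d)"
      using that by (rule pres_eq_if_relators_trivial) simp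
    moreover have "pres_eq {s'} (d @ s' @ word_inv d) (d @ word_inv d)"
      by (rule pres_eq.relator) simp
    ultimately show ?thesis
      using pres_eq_append_word_inv by (auto intro: pres_eq.trans)
  qed
  have "pres_eq {} r (c @ r' @ word_inv c)"
    using assms by (simp add: free_group.abs_eq_iff)
  moreover have "abs_free_group r' = abs_free_group (word_inv c @ r @ c)"
    using assms by (simp add: abs_free_group_append abs_free_group_word_inv add.assoc)
  then have "pres_eq {} r' (word_inv c @ r @ word_inv (word_inv c))"
    by (simp add: free_group.abs_eq_iff)
  ultimately have "pres_eq {r'} r []" and "pres_eq {r} r' []"
    by (blast intro: conjugate_trivial)+
  then show ?thesis
    by (intro ext iffI) (auto elim: pres_eq_if_relators_trivial)
qed

theorem lemma3p2:
  fixes m n :: int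
  shows "pres_eq {relation (ga @ word_pow (wk m) n @ gb) (word_pow (wk m) (n + 1))}
       = pres_eq {relation (rk m n) (word_rev (rk m n))}"
proof (rule pres_eq_conjugate_relator)
  define a b where "a = abs_free_group ga" and "b = abs_free_group gb"
  define x y where "x = a - b" and "y = - a + b"
  define w w' where "w = zpow x m + a + b + zpow y m"
    and "w' = zpow (- x) m + b + a + zpow (- y) m"
  have rev_letters: "rev ga = ga" "rev gb = gb" "rev (word_inv ga) = word_inv ga"
    by (simp_all add: ga_def gb_def word_inv_def)
  note add_uminus_conv_diff [simp del] \<comment> \<open>so that both sides normalise to sums\<close>
  note abs_simps = abs_free_group_append abs_free_group_word_inv abs_free_group_word_pow
    rev_word_pow rev_word_inv rev_letters add.assoc minus_add diff_conv_add_uminus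
  have "abs_free_group (wk m) = w" and "abs_free_group (rev (wk m)) = w'"
    by (simp_all add: wk_def w_def w'_def x_def y_def a_def b_def abs_simps)
  then have "abs_free_group (relation (ga @ word_pow (wk m) n @ gb) (word_pow (wk m) (n + 1)))
      = a + zpow w n + b - zpow w (n + 1)"
    and "abs_free_group (ga @ relation (rk m n) (word_rev (rk m n)) @ word_inv ga)
      = a + (zpow w n + zpow x m - (zpow (- y) m + zpow w' n)) - a"
    by (simp_all add: relation_def rk_def word_rev_def x_def y_def a_def b_def abs_simps)
  then show "abs_free_group (relation (ga @ word_pow (wk m) n @ gb) (word_pow (wk m) (n + 1)))
      = abs_free_group (ga @ relation (rk m n) (word_rev (rk m n)) @ word_inv ga)"
    unfolding w_def w'_def x_def y_def by (simp only: double_twist_relators_conjugate)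
qed

end
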